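(* For each integer $A\ge2$ the series $u(z)=\operatorname{Re}\sum_{k=0}^\infty A^kz^{2^{A^k}}$ converges in $\mathbf D$ and there is a constant $C$ with $|u(z)|\le C\log\frac{e}{1-|z|}$ for all $z\in\mathbf D$.
   Context: $\mathbf D$ is the open unit disc. *)

theory Defs
  imports "HOL-Analysis.Analysis"
begin

end

theory Submission
  imports Defs
begin

text \<open>
  Write \<open>r = |z|\<close> and \<open>n\<^sub>k = 2 ^ A ^ k\<close>. Since \<open>n\<^sub>k\<^sub>+\<^sub>1 = n\<^sub>k ^ A\<close>, the block
  \<open>n\<^sub>k \<le> n < n\<^sub>k\<^sub>+\<^sub>1\<close> of the logarithmic series \<open>\<Sum> r^n/n = -ln (1 - r)\<close> dominates
  \<open>r ^ n\<^sub>k\<^sub>+\<^sub>1 (ln n\<^sub>k\<^sub>+\<^sub>1 - ln n\<^sub>k) = (A - 1) A ^ k ln 2 \<cdot> r ^ n\<^sub>k\<^sub>+\<^sub>1\<close>, which is at least a fixed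
  multiple of the \<open>(k+1)\<close>-st term \<open>A ^ (k+1) r ^ n\<^sub>k\<^sub>+\<^sub>1\<close>. The blocks are disjoint, so the
  series converges absolutely with sum at most \<open>1 + (2 / ln 2) (-ln (1 - r))\<close>.
\<close>

lemma ln_diff_le_sum_inverse:
  assumes "1 \<le> a" "a \<le> b"
  shows "ln (real b) - ln (real a) \<le> (\<Sum>n\<in>{a..<b}. 1 / real n)"
  using assms(2)
proof (induction b rule: dec_induct)
  case base
  then show ?case by simp
next
  case (step b)
  have b1: "1 \<le> real b" using assms(1) step.hyps(1) by simp
  have "1 + 1 / real b = real (Suc b) / real b"
    using b1 by (simp add: field_simps)
  then have "ln (real (Suc b)) - ln (real b) = ln (1 + 1 / real b)"
    using b1 by (simp add: ln_div)
  also have "\<dots> \<le> 1 / real b"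
    by (rule ln_add_one_self_le_self) simp
  finally show ?case
    using step.IH step.hyps(1) by simp
qed

lemma power_mult_ln_diff_le_sum:
  fixes r :: real
  assumes "0 \<le> r" "r \<le> 1" "1 \<le> a" "a \<le> b"
  shows "r ^ b * (ln (real b) - ln (real a)) \<le> (\<Sum>n\<in>{a..<b}. r ^ n / real n)"
proof -
  have "r ^ b * (ln (real b) - ln (real a)) \<le> r ^ b * (\<Sum>n\<in>{a..<b}. 1 / real n)"
    using ln_diff_le_sum_inverse[OF assms(3,4)] assms(1) by (simp add: mult_left_mono)
  also have "\<dots> = (\<Sum>n\<in>{a..<b}. r ^ b / real n)"
    by (simp add: sum_distrib_left)
  also have "\<dots> \<le> (\<Sum>n\<in>{a..<b}. r ^ n / real n)"
    using assms(1,2) by (intro sum_mono divide_right_mono power_decreasing) auto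
  finally show ?thesis .
qed

lemma sum_power_divide_le_neg_ln:
  fixes r :: real
  assumes "0 \<le> r" "r < 1" "finite I"
  shows "(\<Sum>n\<in>I. r ^ n / real n) \<le> - ln (1 - r)"
proof -
  have "(\<lambda>n. - ((- (- r)) ^ n) / of_nat n) sums ln (1 + (- r))"
    by (rule ln_series') (use assms in auto)
  then have "(\<lambda>n. r ^ n / real n) sums (- ln (1 - r))"
    using sums_minus by fastforce
  then show ?thesis
    using sum_le_suminf[of "\<lambda>n. r ^ n / real n" I] assms by (auto simp: sums_iff)
qed

lemma lacunary_term_le_log_block:
  fixes r :: real
  assumes "0 \<le> r" "r \<le> 1" "2 \<le> A"
  shows "real (A ^ Suc k) * r ^ (2 ^ A ^ Suc k)
           \<le> (2 / ln 2) * (\<Sum>n\<in>{2 ^ A ^ k..<2 ^ A ^ Suc k}. r ^ n / real n)"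
proof -
  define p where "p = A ^ k"
  have exp_le: "(2::nat) ^ p \<le> 2 ^ (A * p)"
    using assms(3) by (intro power_increasing) auto
  have ln_block: "ln (real (2 ^ (A * p))) - ln (real ((2::nat) ^ p)) = (real A - 1) * real p * ln 2"
    by (simp add: ln_realpow algebra_simps)
  have "2 * real p \<le> real A * real p"
    using assms(3) by (intro mult_right_mono) auto
  then have "real (A * p) \<le> 2 * ((real A - 1) * real p)"
    by (simp add: algebra_simps)
  then have "real (A * p) * r ^ (2 ^ (A * p)) \<le> 2 * ((real A - 1) * real p) * r ^ (2 ^ (A * p))"
    using assms(1) by (simp add: mult_right_mono)
  also have "\<dots> = (2 / ln 2) * (r ^ (2 ^ (A * p)) * (ln (real (2 ^ (A * p))) - ln (real ((2::nat) ^ p))))"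
    by (subst ln_block) (simp add: field_simps)
  also have "\<dots> \<le> (2 / ln 2) * (\<Sum>n\<in>{2 ^ p..<2 ^ (A * p)}. r ^ n / real n)"
    using power_mult_ln_diff_le_sum[OF assms(1,2) _ exp_le] by (intro mult_left_mono) auto
  finally show ?thesis
    by (simp add: p_def)
qed

lemma lacunary_partial_sum_le:
  fixes r :: real
  assumes "0 \<le> r" "r \<le> 1" "2 \<le> A"
  shows "(\<Sum>k<Suc K. real (A ^ k) * r ^ (2 ^ A ^ k))
           \<le> 1 + (2 / ln 2) * (\<Sum>n\<in>{2..<2 ^ A ^ K}. r ^ n / real n)"
proof (induction K)
  case 0
  then show ?case
    using assms(1,2) by (simp add: power_le_one)
next
  case (Suc K)
  have "1 \<le> A ^ K" "A ^ K \<le> A ^ Suc K"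
    using assms(3) by (simp_all add: one_le_power)
  then have "(2::nat) ^ 1 \<le> 2 ^ A ^ K" and "(2::nat) ^ A ^ K \<le> 2 ^ A ^ Suc K"
    by (simp_all only: power_increasing)
  then have "(\<Sum>n\<in>{2..<2 ^ A ^ Suc K}. r ^ n / real n)
      = (\<Sum>n\<in>{2..<2 ^ A ^ K}. r ^ n / real n) + (\<Sum>n\<in>{2 ^ A ^ K..<2 ^ A ^ Suc K}. r ^ n / real n)"
    by (simp add: sum.atLeastLessThan_concat)
  then show ?case
    using Suc.IH lacunary_term_le_log_block[OF assms, of K] by (simp add: algebra_simps)
qed

lemma lacunary_series_norm_bound:
  fixes z :: complex
  assumes "norm z < 1" "2 \<le> A"
  defines "f \<equiv> \<lambda>k. norm (of_nat (A ^ k) * z ^ (2 ^ A ^ k))"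
  shows "summable f" and "suminf f \<le> 1 + (2 / ln 2) * (- ln (1 - norm z))"
proof -
  have r: "0 \<le> norm z" "norm z \<le> 1" using assms(1) by simp_all
  have f_eq: "f k = real (A ^ k) * norm z ^ (2 ^ A ^ k)" for k
    by (simp add: f_def norm_mult norm_power)
  have partial_le: "(\<Sum>k<K. f k) \<le> 1 + (2 / ln 2) * (- ln (1 - norm z))" for K
  proof -
    have "(\<Sum>k<K. f k) \<le> (\<Sum>k<Suc K. f k)"
      by (simp add: f_def)
    also have "\<dots> \<le> 1 + (2 / ln 2) * (\<Sum>n\<in>{2..<2 ^ A ^ K}. norm z ^ n / real n)"
      unfolding f_eq by (rule lacunary_partial_sum_le[OF r assms(2)])
    also have "\<dots> \<le> 1 + (2 / ln 2) * (- ln (1 - norm z))"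
      using sum_power_divide_le_neg_ln[OF r(1) assms(1)] by (intro add_left_mono mult_left_mono) auto
    finally show ?thesis .
  qed
  show "summable f"
    by (rule summableI_nonneg_bounded[OF _ partial_le]) (simp add: f_def)
  then show "suminf f \<le> 1 + (2 / ln 2) * (- ln (1 - norm z))"
    using partial_le by (rule suminf_le_const)
qed

theorem lemma9:
  fixes A :: nat
  assumes "A \<ge> 2"
  shows "(\<forall>z \<in> ball (0::complex) 1.
            summable (\<lambda>k. of_nat (A ^ k) * z ^ (2 ^ (A ^ k))))
       \<and> (\<exists>C::real. \<forall>z \<in> ball (0::complex) 1.
            \<bar>Re (\<Sum>k. of_nat (A ^ k) * z ^ (2 ^ (A ^ k)))\<bar>
              \<le> C * ln (exp 1 / (1 - norm z)))"
proof (intro conjI ballI exI)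
  fix z :: complex
  assume "z \<in> ball 0 1"
  then have z: "norm z < 1" by simp
  note norm_bound = lacunary_series_norm_bound[OF z assms]
  show "summable (\<lambda>k. of_nat (A ^ k) * z ^ (2 ^ (A ^ k)))"
    using norm_bound(1) by (rule summable_norm_cancel)
  have ln_nonneg: "0 \<le> - ln (1 - norm z)"
    using z by simp
  have ln_eq: "ln (exp 1 / (1 - norm z)) = 1 + (- ln (1 - norm z))"
    using z by (simp add: ln_div)
  have "\<bar>Re (\<Sum>k. of_nat (A ^ k) * z ^ (2 ^ (A ^ k)))\<bar> \<le> norm (\<Sum>k. of_nat (A ^ k) * z ^ (2 ^ (A ^ k)))"
    by (rule abs_Re_le_cmod)
  also have "\<dots> \<le> (\<Sum>k. norm (of_nat (A ^ k) * z ^ (2 ^ (A ^ k)) :: complex))"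
    using norm_bound(1) by (rule summable_norm)
  also have "\<dots> \<le> 1 + (2 / ln 2) * (- ln (1 - norm z))"
    by (rule norm_bound(2))
  also have "\<dots> \<le> (1 + 2 / ln 2) * ln (exp 1 / (1 - norm z))"
    unfolding ln_eq using ln_nonneg by (simp only: ring_distribs) (simp add: add_increasing)
  finally show "\<bar>Re (\<Sum>k. of_nat (A ^ k) * z ^ (2 ^ (A ^ k)))\<bar> \<le> (1 + 2 / ln 2) * ln (exp 1 / (1 - norm z))" .
qed

end
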